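(* Suppose $(X_A,\sigma_A)$ and $(X_B,\sigma_B)$ are continuously orbit equivalent via a homeomorphism $h:X_A\to X_B$ with continuous $k_1,l_1:X_A\to\mathbb Z_+$ and $k_2,l_2:X_B\to\mathbb Z_+$ as in the context. Then for all $m\in\mathbb Z_+$, $f\in C(X_B,\mathbb Z)$ and $g\in C(X_A,\mathbb Z)$: (i) for all $x\in X_A$, $\Psi_h(f)^m(x)=f^{l_1^m(x)}(h(x))-f^{k_1^m(x)}(h(\sigma_A^m(x)))$, and $g^m(x)=\Psi_{h^{-1}}(g)^{l_1^m(x)}(h(x))-\Psi_{h^{-1}}(g)^{k_1^m(x)}(h(\sigma_A^m(x)))$; (ii) for all $y\in X_B$, $\Psi_{h^{-1}}(g)^m(y)=g^{l_2^m(y)}(h^{-1}(y))-g^{k_2^m(y)}(h^{-1}(\sigma_B^m(y)))$, and $f^m(y)=\Psi_h(f)^{l_2^m(y)}(h^{-1}(y))-\Psi_h(f)^{k_2^m(y)}(h^{-1}(\sigma_B^m(y)))$.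
   Context: Let $N,M>1$ and let $A$ ($N\times N$), $B$ ($M\times M$) be irreducible $\{0,1\}$-matrices which are not permutation matrices. $X_A$ is the compact space of sequences $(x_n)_{n\in\mathbb N}$ with $x_n\in\{1,\dots,N\}$, $A(x_n,x_{n+1})=1$, and $\sigma_A((x_n)_n)=(x_{n+1})_n$; similarly $(X_B,\sigma_B)$. $\mathbb Z_+$ denotes the nonnegative integers. For a function $u$ on $X_A$ (resp. $X_B$) and $n\in\mathbb Z_+$, $u^n(x)=\sum_{i=0}^{n-1}u(\sigma_A^i(x))$ (resp. with $\sigma_B$), so $u^0=0$. Continuous orbit equivalence via $h$: $h:X_A\to X_B$ is a homeomorphism and $k_1,l_1:X_A\to\mathbb Z_+$, $k_2,l_2:X_B\to\mathbb Z_+$ are continuous with $\sigma_B^{k_1(x)}(h(\sigma_A(x)))=\sigma_B^{l_1(x)}(h(x))$ for all $x\in X_A$ and $\sigma_A^{k_2(y)}(h^{-1}(\sigma_B(y)))=\sigma_A^{l_2(y)}(h^{-1}(y))$ for all $y\in X_B$. Define $\Psi_h:C(X_B,\mathbb Z)\to C(X_A,\mathbb Z)$ by $\Psi_h(f)(x)=\sum_{i=0}^{l_1(x)-1}f(\sigma_B^i(h(x)))-\sum_{j=0}^{k_1(x)-1}f(\sigma_B^j(h(\sigma_A(x))))$, and $\Psi_{h^{-1}}:C(X_A,\mathbb Z)\to C(X_B,\mathbb Z)$ by $\Psi_{h^{-1}}(g)(y)=\sum_{i=0}^{l_2(y)-1}g(\sigma_A^i(h^{-1}(y)))-\sum_{j=0}^{k_2(y)-1}g(\sigma_A^j(h^{-1}(\sigma_B(y))))$.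 Here $l_1^m,k_1^m$ (resp. $l_2^m,k_2^m$) are the Birkhoff sums of $l_1,k_1$ over $\sigma_A$ (resp. of $l_2,k_2$ over $\sigma_B$). *)

theory Defs
  imports "HOL-Analysis.Analysis"
begin

text \<open>One-sided topological Markov shifts. Points are sequences nat \<Rightarrow> nat,
  carrying the product topology of the discrete space nat (library instance).\<close>

definition shift :: "(nat \<Rightarrow> nat) \<Rightarrow> (nat \<Rightarrow> nat)" where
  "shift x = (\<lambda>n. x (Suc n))"

definition XM :: "nat \<Rightarrow> (nat \<Rightarrow> nat \<Rightarrow> nat) \<Rightarrow> (nat \<Rightarrow> nat) set" where
  "XM N A = {x. (\<forall>n. x n \<in> {1..N}) \<and> (\<forall>n. A (x n) (x (Suc n)) = 1)}"

definition birk :: "('a \<Rightarrow> 'b::comm_monoid_add) \<Rightarrow> ('a \<Rightarrow> 'a) \<Rightarrow> nat \<Rightarrow> 'a \<Rightarrow> 'b" where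
  "birk u T n x = (\<Sum>i<n. u ((T ^^ i) x))"

fun mpow :: "nat \<Rightarrow> (nat \<Rightarrow> nat \<Rightarrow> nat) \<Rightarrow> nat \<Rightarrow> nat \<Rightarrow> nat \<Rightarrow> nat" where
  "mpow N A 0 i j = (if i = j then 1 else 0)"
| "mpow N A (Suc n) i j = (\<Sum>k\<in>{1..N}. mpow N A n i k * A k j)"

definition zero_one_matrix :: "nat \<Rightarrow> (nat \<Rightarrow> nat \<Rightarrow> nat) \<Rightarrow> bool" where
  "zero_one_matrix N A \<longleftrightarrow> (\<forall>i\<in>{1..N}. \<forall>j\<in>{1..N}. A i j \<in> {0,1})"

definition irreducible_matrix :: "nat \<Rightarrow> (nat \<Rightarrow> nat \<Rightarrow> nat) \<Rightarrow> bool" where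
  "irreducible_matrix N A \<longleftrightarrow> (\<forall>i\<in>{1..N}. \<forall>j\<in>{1..N}. \<exists>n>0. mpow N A n i j > 0)"

definition permutation_matrix :: "nat \<Rightarrow> (nat \<Rightarrow> nat \<Rightarrow> nat) \<Rightarrow> bool" where
  "permutation_matrix N A \<longleftrightarrow> (\<exists>p. bij_betw p {1..N} {1..N} \<and>
      (\<forall>i\<in>{1..N}. \<forall>j\<in>{1..N}. A i j = (if p i = j then 1 else 0)))"

text \<open>Psi_h(f)(x) = f^{l1(x)}(h x) - f^{k1(x)}(h(sigma x)); the same definition
  with (h^{-1}, k2, l2) gives Psi_{h^{-1}}.\<close>
definition Psi :: "((nat \<Rightarrow> nat) \<Rightarrow> (nat \<Rightarrow> nat)) \<Rightarrow> ((nat \<Rightarrow> nat) \<Rightarrow> nat) \<Rightarrow> ((nat \<Rightarrow> nat) \<Rightarrow> nat)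
    \<Rightarrow> ((nat \<Rightarrow> nat) \<Rightarrow> int) \<Rightarrow> (nat \<Rightarrow> nat) \<Rightarrow> int" where
  "Psi h k l f x = birk f shift (l x) (h x) - birk f shift (k x) (h (shift x))"

end

theory Submission
  imports Defs
begin

(* Iterating the orbit relation  shift^k1(x) (h (shift x)) = shift^l1(x) (h x)  gives
   shift^(k1^m x) (h (shift^m x)) = shift^(l1^m x) (h x), and the Birkhoff sum of Psi_h(f) telescopes
   along these orbit segments; this yields the first identity in (i) and in (ii).
   The second identities follow from the first ones once Psi_h (Psi_{h^-1} g) = g.  At a point x whose
   forward orbit never repeats, Psi_h (Psi_{h^-1} g) x unwinds to a difference of Birkhoff sums of g along
   two orbit segments that end at the same point, and it collapses to g x because arrival times on such an
   orbit are unique.  These points are dense: a non-permutation irreducible shift has uncountably many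
   continuations of each admissible word, but only countably many eventually periodic points.  Both sides
   are continuous, so the identity holds everywhere. *)

lemma birk_0 [simp]: "birk u T 0 x = 0"
  by (simp add: birk_def)

lemma birk_Suc: "birk u T (Suc m) x = birk u T m x + u ((T ^^ m) x)"
  by (simp add: birk_def)

lemma funpow_commute: "(f ^^ a) ((f ^^ b) z) = (f ^^ b) ((f ^^ a) z)"
  by (metis comp_apply funpow_add add.commute)

lemma birk_add: "birk u T (a + b) z = birk u T a z + birk u T b ((T ^^ a) z)"
  by (induction b) (simp_all add: birk_Suc funpow_add funpow_commute add.assoc)

lemma funpow_in_invariant: "\<forall>x\<in>S. T x \<in> S \<Longrightarrow> x \<in> S \<Longrightarrow> (T ^^ m) x \<in> S"
  by (induction m) auto

lemma orbit_eq_birk: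
  assumes inv: "\<forall>x\<in>S. T x \<in> S"
    and orb: "\<forall>x\<in>S. (T ^^ k x) (\<phi> (T x)) = (T ^^ l x) (\<phi> x)"
    and x: "x \<in> S"
  shows "(T ^^ birk k T m x) (\<phi> ((T ^^ m) x)) = (T ^^ birk l T m x) (\<phi> x)"
proof (induction m)
  case (Suc m)
  define y where "y = (T ^^ m) x"
  have "(T ^^ birk k T (Suc m) x) (\<phi> ((T ^^ Suc m) x))
      = (T ^^ birk k T m x) ((T ^^ k y) (\<phi> (T y)))"
    by (simp add: birk_Suc y_def funpow_add add.commute)
  also have "\<dots> = (T ^^ l y) ((T ^^ birk k T m x) (\<phi> y))"
    using orb funpow_in_invariant[OF inv x] by (simp add: y_def funpow_commute)
  also have "\<dots> = (T ^^ birk l T (Suc m) x) (\<phi> x)"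
    using Suc by (simp add: birk_Suc y_def funpow_add add.commute funpow_commute)
  finally show ?case .
qed simp

lemma birk_Psi:
  assumes inv: "\<forall>x\<in>S. shift x \<in> S"
    and orb: "\<forall>x\<in>S. (shift ^^ k x) (\<phi> (shift x)) = (shift ^^ l x) (\<phi> x)"
    and x: "x \<in> S"
  shows "birk (Psi \<phi> k l F) shift m x
       = birk F shift (birk l shift m x) (\<phi> x) - birk F shift (birk k shift m x) (\<phi> ((shift ^^ m) x))"
proof (induction m)
  case (Suc m)
  define y where "y = (shift ^^ m) x"
  define Lm where "Lm = birk l shift m x"
  define Km where "Km = birk k shift m x"
  have meet: "(shift ^^ Km) (\<phi> y) = (shift ^^ Lm) (\<phi> x)"
    using orbit_eq_birk[OF inv orb x, of m] by (simp add: Km_def Lm_def y_def)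
  have step: "(shift ^^ k y) (\<phi> (shift y)) = (shift ^^ l y) (\<phi> y)"
    using orb funpow_in_invariant[OF inv x] by (simp add: y_def)
  \<comment> \<open>The sum of F over the first Km + l y points of the orbit of \<phi> y, split in either order.\<close>
  have swap: "birk F shift Km (\<phi> y) + birk F shift (l y) ((shift ^^ Km) (\<phi> y))
      = birk F shift (l y) (\<phi> y) + birk F shift Km ((shift ^^ k y) (\<phi> (shift y)))"
    using birk_add[of F shift Km "l y" "\<phi> y"] birk_add[of F shift "l y" Km "\<phi> y"]
    by (simp add: step add.commute)
  have "birk (Psi \<phi> k l F) shift (Suc m) x
      = birk F shift Lm (\<phi> x) - birk F shift Km (\<phi> y) + Psi \<phi> k l F y"
    using Suc by (simp add: birk_Suc Lm_def Km_def y_def)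
  also have "\<dots> = birk F shift (Lm + l y) (\<phi> x) - birk F shift (Km + k y) (\<phi> (shift y))"
    using swap by (simp add: Psi_def birk_add meet add.commute[of Km])
  also have "\<dots> = birk F shift (birk l shift (Suc m) x) (\<phi> x)
      - birk F shift (birk k shift (Suc m) x) (\<phi> ((shift ^^ Suc m) x))"
    by (simp add: birk_Suc Lm_def Km_def y_def)
  finally show ?case .
qed simp

definition aperiodic :: "(nat \<Rightarrow> nat) \<Rightarrow> bool" where
  "aperiodic x \<longleftrightarrow> (\<forall>i j. (shift ^^ i) x = (shift ^^ j) x \<longrightarrow> i = j)"

lemma birk_diff_aperiodic:
  fixes g :: "(nat \<Rightarrow> nat) \<Rightarrow> int"
  assumes ap: "aperiodic x" and za: "(shift ^^ a) z = (shift ^^ c) x" and zb: "(shift ^^ b) z = (shift ^^ e) x"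
  shows "birk g shift c x - birk g shift e x = birk g shift a z - birk g shift b z"
proof -
  have le: "birk g shift c x - birk g shift e x = birk g shift a z - birk g shift b z"
    if za: "(shift ^^ a) z = (shift ^^ c) x" and zb: "(shift ^^ b) z = (shift ^^ e) x" and "b \<le> a"
    for a b c e
  proof -
    obtain t where t: "a = b + t" using \<open>b \<le> a\<close> le_Suc_ex by blast
    have "(shift ^^ (t + e)) x = (shift ^^ t) ((shift ^^ b) z)"
      using zb by (simp add: funpow_add)
    also have "\<dots> = (shift ^^ a) z"
      by (simp add: t funpow_add funpow_commute)
    finally have "(shift ^^ (t + e)) x = (shift ^^ c) x"
      using za by simp
    with ap have "c = e + t" unfolding aperiodic_def by (metis add.commute)
    then show ?thesis using zb by (simp add: t birk_add)
  qed
  show ?thesis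
    using le[OF za zb] le[OF zb za] by (cases "b \<le> a") auto
qed

lemma Psi_Psi_aperiodic:
  assumes inv1: "\<forall>x\<in>S1. shift x \<in> S1" and inv2: "\<forall>y\<in>S2. shift y \<in> S2"
    and hS: "\<forall>x\<in>S1. h x \<in> S2" and hh: "\<forall>x\<in>S1. hinv (h x) = x"
    and orb1: "\<forall>x\<in>S1. (shift ^^ k1 x) (h (shift x)) = (shift ^^ l1 x) (h x)"
    and orb2: "\<forall>y\<in>S2. (shift ^^ k2 y) (hinv (shift y)) = (shift ^^ l2 y) (hinv y)"
    and x: "x \<in> S1" and ap: "aperiodic x"
  shows "Psi h k1 l1 (Psi hinv k2 l2 g) x = g x"
proof -
  have sx: "shift x \<in> S1" using inv1 x by simp
  define y1 where "y1 = h x"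
  define y2 where "y2 = h (shift x)"
  have y1: "y1 \<in> S2" and y2: "y2 \<in> S2" using hS x sx by (auto simp: y1_def y2_def)
  have hy1: "hinv y1 = x" and hy2: "hinv y2 = shift x" using hh x sx by (auto simp: y1_def y2_def)
  define w where "w = (shift ^^ l1 x) y1"
  have w2: "(shift ^^ k1 x) y2 = w" using orb1 x by (simp add: w_def y1_def y2_def)
  define z where "z = hinv w"
  define c where "c = birk l2 shift (l1 x) y1"
  define a where "a = birk k2 shift (l1 x) y1"
  define d where "d = birk l2 shift (k1 x) y2"
  define b where "b = birk k2 shift (k1 x) y2"
  have P1: "birk (Psi hinv k2 l2 g) shift (l1 x) y1 = birk g shift c x - birk g shift a z"
    using birk_Psi[OF inv2 orb2 y1] by (simp add: c_def a_def z_def w_def hy1)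
  have P2: "birk (Psi hinv k2 l2 g) shift (k1 x) y2 = birk g shift d (shift x) - birk g shift b z"
    using birk_Psi[OF inv2 orb2 y2] by (simp add: d_def b_def z_def w2 hy2)
  have za: "(shift ^^ a) z = (shift ^^ c) x"
    using orbit_eq_birk[OF inv2 orb2 y1] by (simp add: c_def a_def z_def w_def hy1)
  have zb: "(shift ^^ b) z = (shift ^^ Suc d) x"
    using orbit_eq_birk[OF inv2 orb2 y2, of "k1 x"]
    by (simp add: d_def b_def z_def w2 hy2 funpow_Suc_right del: funpow.simps)
  have gd: "birk g shift (Suc d) x = g x + birk g shift d (shift x)"
    using birk_add[of g shift 1 d x] by (simp add: birk_def)
  have "Psi h k1 l1 (Psi hinv k2 l2 g) x
     = (birk g shift c x - birk g shift a z) - (birk g shift d (shift x) - birk g shift b z)"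
    by (simp add: Psi_def P1 P2 flip: y1_def y2_def)
  also have "\<dots> = g x" using birk_diff_aperiodic[OF ap za zb, of g] gd by simp
  finally show ?thesis .
qed

lemma continuous_on_shift: "continuous_on UNIV shift"
  unfolding shift_def
  by (intro continuous_on_coordinatewise_then_product continuous_on_product_coordinates)

lemma continuous_on_funpow_shift: "continuous_on UNIV (shift ^^ n)"
  by (induction n) (auto intro: continuous_on_compose2[OF continuous_on_shift])

lemma continuous_on_birk:
  fixes F :: "(nat \<Rightarrow> nat) \<Rightarrow> int"
  assumes F: "continuous_on S F" and inv: "\<forall>y\<in>S. shift y \<in> S"
  shows "continuous_on S (birk F shift n)"
proof -
  have "continuous_on S (\<lambda>y. F ((shift ^^ i) y))" for i
    using continuous_on_compose2[OF F continuous_on_subset[OF continuous_on_funpow_shift]]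
      funpow_in_invariant[OF inv] by auto
  then show ?thesis unfolding birk_def by (intro continuous_on_sum) auto
qed

lemma continuous_on_discrete_index:
  fixes G :: "'i::discrete_topology \<Rightarrow> 'a::topological_space \<Rightarrow> 'b::topological_space"
  assumes G: "\<And>n. continuous_on S (G n)" and L: "continuous_on S L"
  shows "continuous_on S (\<lambda>x. G (L x) x)"
  unfolding continuous_on_def
proof
  fix a assume a: "a \<in> S"
  have ev: "eventually (\<lambda>x. L x = L a) (at a within S)"
    using L a unfolding continuous_on_def by (auto simp: tendsto_discrete)
  have "(G (L a) \<longlongrightarrow> G (L a) a) (at a within S)"
    using G[of "L a"] a unfolding continuous_on_def by auto
  then show "((\<lambda>x. G (L x) x) \<longlongrightarrow> G (L a) a) (at a within S)"
    by (rule Lim_transform_eventually) (use ev in \<open>auto elim: eventually_mono\<close>)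
qed

lemma continuous_on_discrete_binop:
  fixes f :: "'a::topological_space \<Rightarrow> 'b::discrete_topology" and g :: "'a \<Rightarrow> 'c::discrete_topology"
    and H :: "'b \<Rightarrow> 'c \<Rightarrow> 'd::topological_space"
  assumes f: "continuous_on S f" and g: "continuous_on S g"
  shows "continuous_on S (\<lambda>x. H (f x) (g x))"
proof (rule continuous_on_discrete_index[OF _ f])
  fix b
  show "continuous_on S (\<lambda>x. H b (g x))"
    by (rule continuous_on_discrete_index[OF continuous_on_const g])
qed

lemma continuous_on_Psi:
  fixes F :: "(nat \<Rightarrow> nat) \<Rightarrow> int"
  assumes k: "continuous_on S k" and l: "continuous_on S l" and \<phi>: "continuous_on S \<phi>"
    and \<phi>S: "\<forall>x\<in>S. \<phi> x \<in> S'" and inv: "\<forall>x\<in>S. shift x \<in> S"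
    and F: "continuous_on S' F" and inv': "\<forall>y\<in>S'. shift y \<in> S'"
  shows "continuous_on S (Psi \<phi> k l F)"
proof -
  have birk_lag: "continuous_on S (\<lambda>x. birk F shift (L x) (\<psi> x))"
    if L: "continuous_on S L" and \<psi>: "continuous_on S \<psi>" and \<psi>S: "\<forall>x\<in>S. \<psi> x \<in> S'" for L \<psi>
  proof (rule continuous_on_discrete_index[OF _ L])
    fix n
    show "continuous_on S (\<lambda>x. birk F shift n (\<psi> x))"
      using continuous_on_compose2[OF continuous_on_birk[OF F inv'] \<psi>] \<psi>S by blast
  qed
  have "continuous_on S (\<lambda>x. \<phi> (shift x))"
    using continuous_on_compose2[OF \<phi> continuous_on_subset[OF continuous_on_shift]] inv by auto
  then have "continuous_on S (\<lambda>x. birk F shift (l x) (\<phi> x) - birk F shift (k x) (\<phi> (shift x)))"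
    using birk_lag[OF l \<phi>] birk_lag[OF k] \<phi>S inv
    by (intro continuous_on_discrete_binop[where H="(-)"]) auto
  then show ?thesis unfolding Psi_def[abs_def] .
qed

lemma XM_shift: "x \<in> XM N A \<Longrightarrow> shift x \<in> XM N A"
  unfolding XM_def shift_def by auto

definition apath :: "nat \<Rightarrow> (nat \<Rightarrow> nat \<Rightarrow> nat) \<Rightarrow> nat \<Rightarrow> (nat \<Rightarrow> nat) \<Rightarrow> nat \<Rightarrow> nat \<Rightarrow> bool" where
  "apath N A n p i j \<longleftrightarrow>
     p 0 = i \<and> p n = j \<and> (\<forall>t\<le>n. p t \<in> {1..N}) \<and> (\<forall>t<n. A (p t) (p (Suc t)) = 1)"

lemma apath_of_XM: "x \<in> XM N A \<Longrightarrow> apath N A n x (x 0) (x n)"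
  unfolding XM_def apath_def by auto

lemma apath_Cons:
  assumes "A v u = 1" "v \<in> {1..N}" "apath N A n p u w"
  shows "apath N A (Suc n) (\<lambda>t. if t = 0 then v else p (t - 1)) v w"
  using assms unfolding apath_def by (auto simp: less_Suc_eq_0_disj)

lemma apath_of_mpow:
  assumes z: "zero_one_matrix N A"
  shows "mpow N A n i j > 0 \<Longrightarrow> i \<in> {1..N} \<Longrightarrow> j \<in> {1..N} \<Longrightarrow> \<exists>p. apath N A n p i j"
proof (induction n arbitrary: j)
  case 0
  then have "apath N A 0 (\<lambda>_. i) i j" by (auto simp: apath_def split: if_splits)
  then show ?case by blast
next
  case (Suc n)
  then have "(\<Sum>k\<in>{1..N}. mpow N A n i k * A k j) \<noteq> 0" by (simp only: mpow.simps)
  then obtain k where k: "k \<in> {1..N}" "mpow N A n i k * A k j \<noteq> 0"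
    using sum.not_neutral_contains_not_neutral by blast
  have "A k j = 1" using z k Suc.prems(3) unfolding zero_one_matrix_def by fastforce
  obtain p where p: "apath N A n p i k" using Suc.IH k Suc.prems(2) by auto
  have "apath N A (Suc n) (p(Suc n := j)) i j"
    using p \<open>A k j = 1\<close> Suc.prems(3) unfolding apath_def
    by (auto simp: less_Suc_eq le_Suc_eq)
  then show ?case by blast
qed

lemma apath_irreducible:
  assumes "zero_one_matrix N A" and "irreducible_matrix N A" and "i \<in> {1..N}" and "j \<in> {1..N}"
  obtains n p where "n > 0" "apath N A n p i j"
  using assms apath_of_mpow unfolding irreducible_matrix_def by meson

lemma branching_vertex:
  assumes z: "zero_one_matrix N A" and irr: "irreducible_matrix N A" and np: "\<not> permutation_matrix N A"
  obtains v u1 u2 where "v \<in> {1..N}" "u1 \<in> {1..N}" "u2 \<in> {1..N}" "u1 \<noteq> u2" "A v u1 = 1" "A v u2 = 1"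
proof (rule ccontr)
  assume "\<not> thesis"
  with that have nb: "u1 = u2"
    if "v \<in> {1..N}" "u1 \<in> {1..N}" "u2 \<in> {1..N}" "A v u1 = 1" "A v u2 = 1" for v u1 u2
    using that by blast
  have succ: "\<exists>u\<in>{1..N}. A v u = 1" if v: "v \<in> {1..N}" for v
  proof -
    obtain n p where "n > 0" "apath N A n p v v" using apath_irreducible[OF z irr v v] .
    then show ?thesis unfolding apath_def by (metis le_simps(3) less_eq_Suc_le)
  qed
  have pred: "\<exists>v\<in>{1..N}. A v j = 1" if j: "j \<in> {1..N}" for j
  proof -
    obtain n p where "n > 0" "apath N A n p j j" using apath_irreducible[OF z irr j j] .
    then show ?thesis unfolding apath_def by (metis Suc_pred diff_le_self lessI)
  qed
  define q where "q v = (SOME u. u \<in> {1..N} \<and> A v u = 1)" for v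
  have q: "q v \<in> {1..N} \<and> A v (q v) = 1" if "v \<in> {1..N}" for v
    using someI_ex[OF succ[OF that, unfolded Bex_def]] unfolding q_def .
  have Aq: "A v j = (if q v = j then 1 else 0)" if v: "v \<in> {1..N}" and j: "j \<in> {1..N}" for v j
  proof (cases "A v j = 1")
    case True
    then show ?thesis using nb[OF v _ j] q[OF v] by auto
  next
    case False
    moreover have "A v j \<in> {0, 1}" using z v j unfolding zero_one_matrix_def by blast
    ultimately show ?thesis using q[OF v] by auto
  qed
  have "q ` {1..N} = {1..N}"
  proof
    show "{1..N} \<subseteq> q ` {1..N}"
    proof
      fix j assume j: "j \<in> {1..N}"
      then obtain v where v: "v \<in> {1..N}" "A v j = 1" using pred by blast
      then have "q v = j" using nb[OF v(1) _ j _ v(2)] q by blast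
      then show "j \<in> q ` {1..N}" using v(1) by blast
    qed
  qed (use q in auto)
  then have "bij_betw q {1..N} {1..N}"
    unfolding bij_betw_def using eq_card_imp_inj_on[of "{1..N}" q] by simp
  with Aq np show False unfolding permutation_matrix_def by blast
qed

lemma apath_append_XM:
  assumes p: "apath N A m r i j" and z: "z \<in> XM N A" and z0: "z 0 = j"
  shows "(\<lambda>t. if t < m then r t else z (t - m)) \<in> XM N A"
  unfolding XM_def
proof (intro CollectI conjI allI)
  fix t
  show "(if t < m then r t else z (t - m)) \<in> {1..N}"
    using p z unfolding apath_def XM_def by auto
  consider "Suc t < m" | "Suc t = m" | "m \<le> t" by linarith
  then show "A (if t < m then r t else z (t - m)) (if Suc t < m then r (Suc t) else z (Suc t - m)) = 1"
  proof cases
    case 1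
    then show ?thesis using p unfolding apath_def by auto
  next
    case 2
    then show ?thesis using p z0 unfolding apath_def by auto
  next
    case 3
    then have "Suc t - m = Suc (t - m)" by simp
    with 3 show ?thesis using z unfolding XM_def by auto
  qed
qed

lemma concat_loops_XM:
  assumes d: "\<And>k. apath N A Q (d k) v v" and Q: "Q > 0"
  shows "(\<lambda>t. d (t div Q) (t mod Q)) \<in> XM N A"
  unfolding XM_def
proof (intro CollectI conjI allI)
  fix t
  show "d (t div Q) (t mod Q) \<in> {1..N}"
    using d Q unfolding apath_def by (simp add: less_imp_le)
  show "A (d (t div Q) (t mod Q)) (d (Suc t div Q) (Suc t mod Q)) = 1"
  proof (cases "Suc t mod Q = 0")
    case True
    then have "Suc (t mod Q) = Q" using Q by (metis mod_Suc mod_less_divisor nat.distinct(1))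
    moreover have "A (d (t div Q) (t mod Q)) (d (t div Q) (Suc (t mod Q))) = 1"
      using d[of "t div Q"] Q unfolding apath_def by simp
    ultimately show ?thesis using d[of "t div Q"] d[of "Suc t div Q"] True unfolding apath_def by simp
  next
    case False
    then have "Suc (t mod Q) \<noteq> Q" by (auto simp: mod_Suc)
    then have "Suc t div Q = t div Q" "Suc t mod Q = Suc (t mod Q)" by (simp_all add: div_Suc mod_Suc)
    then show ?thesis using d[of "t div Q"] Q unfolding apath_def by simp
  qed
qed

lemma apath_repeat_loop:
  assumes c: "apath N A P c v v" and P: "P > 0"
  shows "apath N A (k * P) (\<lambda>t. c (t mod P)) v v"
proof -
  have "(\<lambda>t. c (t mod P)) \<in> XM N A"
    using concat_loops_XM[of N A P "\<lambda>_. c" v] c P by simp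
  then show ?thesis using apath_of_XM[of _ N A "k * P"] c unfolding apath_def by simp
qed

lemma branching_loops:
  assumes z: "zero_one_matrix N A" and irr: "irreducible_matrix N A" and np: "\<not> permutation_matrix N A"
  obtains v Q d1 d2 where "apath N A Q d1 v v" "apath N A Q d2 v v" "d1 1 \<noteq> d2 1" "Q > 1"
proof -
  obtain v u1 u2 where v: "v \<in> {1..N}" and u: "u1 \<in> {1..N}" "u2 \<in> {1..N}" "u1 \<noteq> u2"
    and A: "A v u1 = 1" "A v u2 = 1"
    using branching_vertex[OF z irr np] .
  obtain n1 p1 where n1: "n1 > 0" and p1: "apath N A n1 p1 u1 v"
    using apath_irreducible[OF z irr u(1) v] .
  obtain n2 p2 where n2: "n2 > 0" and p2: "apath N A n2 p2 u2 v"
    using apath_irreducible[OF z irr u(2) v] .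
  define c1 where "c1 t = (if t = 0 then v else p1 (t - 1))" for t
  define c2 where "c2 t = (if t = 0 then v else p2 (t - 1))" for t
  have c1: "apath N A (Suc n1) c1 v v" unfolding c1_def by (rule apath_Cons[OF A(1) v p1])
  have c2: "apath N A (Suc n2) c2 v v" unfolding c2_def by (rule apath_Cons[OF A(2) v p2])
  \<comment> \<open>Repeating each loop brings both to the common length (Suc n1) * (Suc n2).\<close>
  have "apath N A (Suc n2 * Suc n1) (\<lambda>t. c1 (t mod Suc n1)) v v"
    using apath_repeat_loop[OF c1] by blast
  moreover have "apath N A (Suc n1 * Suc n2) (\<lambda>t. c2 (t mod Suc n2)) v v"
    using apath_repeat_loop[OF c2] by blast
  moreover have "c1 (1 mod Suc n1) \<noteq> c2 (1 mod Suc n2)"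
    using n1 n2 p1 p2 u(3) unfolding c1_def c2_def apath_def by simp
  moreover have "Suc n1 * Suc n2 > 1" using n1 n2 by simp
  ultimately show thesis using that by (metis mult.commute)
qed

lemma injective_family_XM:
  assumes z: "zero_one_matrix N A" and irr: "irreducible_matrix N A" and np: "\<not> permutation_matrix N A"
  obtains \<Phi> :: "(nat \<Rightarrow> bool) \<Rightarrow> nat \<Rightarrow> nat" and v
  where "inj \<Phi>" "\<And>s. \<Phi> s \<in> XM N A" "\<And>s. \<Phi> s 0 = v"
proof -
  obtain v Q d1 d2 where d1: "apath N A Q d1 v v" and d2: "apath N A Q d2 v v"
    and d12: "d1 1 \<noteq> d2 1" and Q: "Q > 1"
    using branching_loops[OF z irr np] .
  define \<Phi> where "\<Phi> s t = (if s (t div Q) then d1 else d2) (t mod Q)" for s t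
  have "\<Phi> s \<in> XM N A" for s
    using concat_loops_XM[of N A Q "\<lambda>k. if s k then d1 else d2" v] d1 d2 Q
    unfolding \<Phi>_def by (simp add: if_distrib)
  moreover have "\<Phi> s 0 = v" for s
    using d1 d2 unfolding \<Phi>_def apath_def by simp
  moreover have "inj \<Phi>"
  proof (rule injI)
    fix s s' assume eq: "\<Phi> s = \<Phi> s'"
    show "s = s'"
    proof
      fix k
      have "(1 + k * Q) div Q = k" "(1 + k * Q) mod Q = 1"
        using Q by (simp_all only: div_mult_self1 mod_mult_self1) simp_all
      then show "s k = s' k"
        using fun_cong[OF eq, of "1 + k * Q"] d12 unfolding \<Phi>_def by (auto split: if_splits)
    qed
  qed
  ultimately show thesis using that by blast
qed

lemma funpow_shift: "(shift ^^ i) x = (\<lambda>t. x (t + i))"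
  by (induction i arbitrary: x) (auto simp: shift_def)

lemma uncountable_UNIV_nat_bool_fun: "\<not> countable (UNIV :: (nat \<Rightarrow> bool) set)"
proof
  assume "countable (UNIV :: (nat \<Rightarrow> bool) set)"
  then have "range (from_nat_into (UNIV :: (nat \<Rightarrow> bool) set)) = UNIV"
    by (simp add: range_from_nat_into)
  then obtain k where "from_nat_into UNIV k = (\<lambda>n. \<not> from_nat_into UNIV n n)"
    by (metis UNIV_I imageE)
  from fun_cong[OF this, of k] show False by simp
qed

lemma eventually_periodic_reduce:
  fixes x :: "nat \<Rightarrow> 'a"
  assumes per: "\<And>t. x (t + i + p) = x (t + i)" and p: "p > 0" and t: "i \<le> t"
  shows "x t = x (i + (t - i) mod p)"
proof -
  have "x (i + r + q * p) = x (i + r)" for r q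
  proof (induction q)
    case (Suc q)
    then show ?case using per[of "r + q * p"] by (simp add: algebra_simps)
  qed simp
  from this[of "(t - i) mod p" "(t - i) div p"] show ?thesis
    using t by (simp add: add.assoc)
qed

lemma countable_not_aperiodic: "countable {x. \<not> aperiodic x}"
proof -
  define decode :: "nat \<times> nat \<times> nat list \<Rightarrow> nat \<Rightarrow> nat"
    where "decode = (\<lambda>(i, p, xs) t. xs ! (if t < i then t else i + (t - i) mod p))"
  have "{x. \<not> aperiodic x} \<subseteq> range decode"
  proof
    fix x assume "x \<in> {x. \<not> aperiodic x}"
    then obtain i j where "(shift ^^ i) x = (shift ^^ j) x" "i \<noteq> j"
      unfolding aperiodic_def by blast
    then obtain i j where ij: "(shift ^^ i) x = (shift ^^ j) x" "i < j"
      by (metis nat_neq_iff)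
    define p where "p = j - i"
    have p: "p > 0" using ij by (simp add: p_def)
    have per: "x (t + i + p) = x (t + i)" for t
      using fun_cong[OF ij(1), of t] ij(2) by (simp add: funpow_shift p_def)
    have "x = decode (i, p, map x [0..<i + p])"
    proof
      fix t
      have "i + (t - i) mod p < i + p" using p by simp
      then show "x t = decode (i, p, map x [0..<i + p]) t"
        using eventually_periodic_reduce[OF per p, of t] by (simp add: decode_def del: upt_Suc)
    qed
    then show "x \<in> range decode" by blast
  qed
  then show ?thesis by (rule countable_subset) simp
qed

lemma dense_aperiodic:
  assumes z: "zero_one_matrix N A" and irr: "irreducible_matrix N A" and np: "\<not> permutation_matrix N A"
    and a: "a \<in> XM N A"
  obtains u where "u \<in> XM N A" "aperiodic u" "\<forall>i<n. u i = a i"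
proof -
  obtain \<Phi> :: "(nat \<Rightarrow> bool) \<Rightarrow> nat \<Rightarrow> nat" and v
    where inj: "inj \<Phi>" and \<Phi>: "\<And>s. \<Phi> s \<in> XM N A" and \<Phi>0: "\<And>s. \<Phi> s 0 = v"
    using injective_family_XM[OF z irr np] by blast
  have v: "v \<in> {1..N}" using \<Phi>[of undefined] \<Phi>0[of undefined] unfolding XM_def by force
  have an: "a n \<in> {1..N}" using a unfolding XM_def by auto
  obtain m r where "m > 0" and r: "apath N A m r (a n) v" using apath_irreducible[OF z irr an v] .
  define \<Psi> where "\<Psi> s t = (if t < n then a t else if t - n < m then r (t - n) else \<Phi> s (t - n - m))" for s t
  have "\<Psi> s \<in> XM N A" for s
  proof -
    have "r 0 = a n" using r unfolding apath_def by simp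
    then have "(\<lambda>t. if t < m then r t else \<Phi> s (t - m)) 0 = a n" using \<open>m > 0\<close> by simp
    from apath_append_XM[OF apath_of_XM[OF a] apath_append_XM[OF r \<Phi> \<Phi>0] this]
    show ?thesis unfolding \<Psi>_def .
  qed
  moreover have "inj \<Psi>"
  proof (rule injI)
    fix s s' assume "\<Psi> s = \<Psi> s'"
    then have "\<Phi> s t = \<Phi> s' t" for t
      using fun_cong[of "\<Psi> s" "\<Psi> s'" "t + m + n"] unfolding \<Psi>_def by simp
    then show "s = s'" using inj by (meson ext injD)
  qed
  \<comment> \<open>Uncountably many extensions of the prefix, but only countably many eventually periodic sequences.\<close>
  moreover have "\<exists>s. aperiodic (\<Psi> s)"
  proof (rule ccontr)
    assume "\<nexists>s. aperiodic (\<Psi> s)"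
    then have "countable (range \<Psi>)"
      by (auto intro: countable_subset[OF _ countable_not_aperiodic])
    then show False
      using countable_image_inj_on[OF _ \<open>inj \<Psi>\<close>] uncountable_UNIV_nat_bool_fun by blast
  qed
  moreover have "\<forall>i<n. \<Psi> s i = a i" for s unfolding \<Psi>_def by simp
  ultimately show thesis using that by blast
qed

lemma aperiodic_sequence_tendsto:
  assumes z: "zero_one_matrix N A" and irr: "irreducible_matrix N A" and np: "\<not> permutation_matrix N A"
    and a: "a \<in> XM N A"
  obtains u where "\<And>n. u n \<in> XM N A" "\<And>n. aperiodic (u n)" "u \<longlonglongrightarrow> a"
proof -
  have "\<forall>n. \<exists>w. w \<in> XM N A \<and> aperiodic w \<and> (\<forall>i<n. w i = a i)"
    using dense_aperiodic[OF z irr np a] by blast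
  then obtain u where u: "\<And>n. u n \<in> XM N A \<and> aperiodic (u n) \<and> (\<forall>i<n. u n i = a i)"
    by metis
  have "(\<lambda>n. u n i) \<longlonglongrightarrow> a i" for i
  proof (rule tendsto_eventually)
    show "eventually (\<lambda>n. u n i = a i) sequentially"
      unfolding eventually_sequentially using u by (intro exI[of _ "Suc i"]) auto
  qed
  then have "limitin (product_topology (\<lambda>_. euclidean) UNIV) u a sequentially"
    by (simp add: limitin_componentwise)
  then have "u \<longlonglongrightarrow> a"
    by (simp add: euclidean_product_topology)
  then show thesis using u that by blast
qed

lemma Psi_Psi:
  fixes g :: "(nat \<Rightarrow> nat) \<Rightarrow> int"
  assumes z: "zero_one_matrix N A" and irr: "irreducible_matrix N A" and np: "\<not> permutation_matrix N A"
    and hom: "homeomorphism (XM N A) S2 h hinv" and inv2: "\<forall>y\<in>S2. shift y \<in> S2"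
    and k1: "continuous_on (XM N A) k1" and l1: "continuous_on (XM N A) l1"
    and k2: "continuous_on S2 k2" and l2: "continuous_on S2 l2"
    and orb1: "\<forall>x\<in>XM N A. (shift ^^ k1 x) (h (shift x)) = (shift ^^ l1 x) (h x)"
    and orb2: "\<forall>y\<in>S2. (shift ^^ k2 y) (hinv (shift y)) = (shift ^^ l2 y) (hinv y)"
    and g: "continuous_on (XM N A) g" and x: "x \<in> XM N A"
  shows "Psi h k1 l1 (Psi hinv k2 l2 g) x = g x"
proof -
  have inv1: "\<forall>x\<in>XM N A. shift x \<in> XM N A" using XM_shift by blast
  have hS: "\<forall>x\<in>XM N A. h x \<in> S2" and hh: "\<forall>x\<in>XM N A. hinv (h x) = x"
    and hinvS: "\<forall>y\<in>S2. hinv y \<in> XM N A"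
    and hc: "continuous_on (XM N A) h" and hinvc: "continuous_on S2 hinv"
    using hom unfolding homeomorphism_def by auto
  have "continuous_on (XM N A) (Psi h k1 l1 (Psi hinv k2 l2 g))"
    by (intro continuous_on_Psi[OF k1 l1 hc hS inv1 _ inv2]
        continuous_on_Psi[OF k2 l2 hinvc hinvS inv2 g inv1])
  \<comment> \<open>Both sides are continuous and agree on the dense set of aperiodic points.\<close>
  moreover obtain u where u: "\<And>n. u n \<in> XM N A" "\<And>n. aperiodic (u n)" and ux: "u \<longlonglongrightarrow> x"
    using aperiodic_sequence_tendsto[OF z irr np x] by blast
  ultimately have "(\<lambda>n. Psi h k1 l1 (Psi hinv k2 l2 g) (u n)) \<longlonglongrightarrow> Psi h k1 l1 (Psi hinv k2 l2 g) x"
    using x by (intro continuous_on_tendsto_compose[OF _ ux]) auto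
  moreover have "(\<lambda>n. g (u n)) \<longlonglongrightarrow> g x"
    using g x u by (intro continuous_on_tendsto_compose[OF _ ux]) auto
  moreover have "Psi h k1 l1 (Psi hinv k2 l2 g) (u n) = g (u n)" for n
    using Psi_Psi_aperiodic[OF inv1 inv2 hS hh orb1 orb2 u] .
  ultimately show ?thesis using LIMSEQ_unique by auto
qed

lemma birk_cong:
  assumes "\<forall>x\<in>S. T x \<in> S" and "x \<in> S" and "\<And>y. y \<in> S \<Longrightarrow> u y = v y"
  shows "birk u T m x = birk v T m x"
  unfolding birk_def using assms funpow_in_invariant by (metis (no_types, lifting) sum.cong)

theorem lemma4p5:
  fixes N M :: nat and A B :: "nat \<Rightarrow> nat \<Rightarrow> nat"
    and h hinv :: "(nat \<Rightarrow> nat) \<Rightarrow> (nat \<Rightarrow> nat)"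
    and k1 l1 k2 l2 :: "(nat \<Rightarrow> nat) \<Rightarrow> nat"
    and m :: nat and f g :: "(nat \<Rightarrow> nat) \<Rightarrow> int"
  assumes "N > 1" and "M > 1"
    and "zero_one_matrix N A" and "irreducible_matrix N A" and "\<not> permutation_matrix N A"
    and "zero_one_matrix M B" and "irreducible_matrix M B" and "\<not> permutation_matrix M B"
    and hom: "homeomorphism (XM N A) (XM M B) h hinv"
    and "continuous_on (XM N A) k1" and "continuous_on (XM N A) l1"
    and "continuous_on (XM M B) k2" and "continuous_on (XM M B) l2"
    and orb1: "\<forall>x\<in>XM N A. (shift ^^ k1 x) (h (shift x)) = (shift ^^ l1 x) (h x)"
    and orb2: "\<forall>y\<in>XM M B. (shift ^^ k2 y) (hinv (shift y)) = (shift ^^ l2 y) (hinv y)"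
    and f: "continuous_on (XM M B) f"
    and g: "continuous_on (XM N A) g"
  shows "(\<forall>x\<in>XM N A.
            birk (Psi h k1 l1 f) shift m x
              = birk f shift (birk l1 shift m x) (h x)
                - birk f shift (birk k1 shift m x) (h ((shift ^^ m) x))
          \<and> birk g shift m x
              = birk (Psi hinv k2 l2 g) shift (birk l1 shift m x) (h x)
                - birk (Psi hinv k2 l2 g) shift (birk k1 shift m x) (h ((shift ^^ m) x)))
       \<and> (\<forall>y\<in>XM M B.
            birk (Psi hinv k2 l2 g) shift m y
              = birk g shift (birk l2 shift m y) (hinv y)
                - birk g shift (birk k2 shift m y) (hinv ((shift ^^ m) y))
          \<and> birk f shift m y
              = birk (Psi h k1 l1 f) shift (birk l2 shift m y) (hinv y)
                - birk (Psi h k1 l1 f) shift (birk k2 shift m y) (hinv ((shift ^^ m) y)))"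
proof -
  have inv1: "\<forall>x\<in>XM N A. shift x \<in> XM N A" and inv2: "\<forall>y\<in>XM M B. shift y \<in> XM M B"
    using XM_shift by blast+
  have "birk g shift m x = birk (Psi h k1 l1 (Psi hinv k2 l2 g)) shift m x" if "x \<in> XM N A" for x
    using birk_cong[OF inv1 that] Psi_Psi[OF assms(3-5) hom inv2 assms(10-13) orb1 orb2 g] by metis
  moreover have "birk f shift m y = birk (Psi hinv k2 l2 (Psi h k1 l1 f)) shift m y" if "y \<in> XM M B" for y
    using birk_cong[OF inv2 that] homeomorphism_sym[THEN iffD1, OF hom]
      Psi_Psi[OF assms(6-8) _ inv1 assms(12,13,10,11) orb2 orb1 f] by metis
  ultimately show ?thesis
    using birk_Psi[OF inv1 orb1] birk_Psi[OF inv2 orb2] by simp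
qed

end
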